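(* Let $G$ be a $3$-edge-connected graph and let $(o,f)$ be an all-positive nowhere-zero $k$-flow on $G$ for some integer $k$. Then every edge $e$ with $f(e)=1$ and every strong $2$-edge of $(o,f)$ is deletable in the orientation $(G,o)$.
   Context: An orientation is strong if for every ordered pair of distinct vertices $u,v$ there is a directed $uv$-path. An edge $e$ is deletable in an orientation $(G,o)$ if the restriction of $o$ to $E(G)\setminus\{e\}$ is a strong orientation of $G-e$. An all-positive nowhere-zero $k$-flow on $G$ is a pair $(o,f)$ of an orientation $o$ of $G$ and a map $f:E(G)\to\{1,2,\dots,k-1\}$ such that at every vertex the sum of $f$ over incoming edges equals the sum of $f$ over outgoing edges. An edge $e$ with $f(e)=2$ is a strong $2$-edge of $(o,f)$ if $G$ has no $3$-edge-cut containing $e$ in which the other two edges both have $f$-value $1$. *)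

theory Defs
  imports Main
begin

text \<open>A finite multigraph (loops and parallel edges allowed): vertex set V, edge set E,
  each edge e having ends s e and t e (a fixed reference labelling of the two ends).
  An orientation is o :: 'e => bool: ori e = True directs e from s e to t e,
  ori e = False directs it from t e to s e.\<close>

definition graph :: "'v set \<Rightarrow> 'e set \<Rightarrow> ('e \<Rightarrow> 'v) \<Rightarrow> ('e \<Rightarrow> 'v) \<Rightarrow> bool" where
  "graph V E s t \<longleftrightarrow> finite V \<and> finite E \<and> (\<forall>e\<in>E. s e \<in> V \<and> t e \<in> V)"

definition otail :: "('e \<Rightarrow> 'v) \<Rightarrow> ('e \<Rightarrow> 'v) \<Rightarrow> ('e \<Rightarrow> bool) \<Rightarrow> 'e \<Rightarrow> 'v" where
  "otail s t ori e = (if ori e then s e else t e)"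

definition ohead :: "('e \<Rightarrow> 'v) \<Rightarrow> ('e \<Rightarrow> 'v) \<Rightarrow> ('e \<Rightarrow> bool) \<Rightarrow> 'e \<Rightarrow> 'v" where
  "ohead s t ori e = (if ori e then t e else s e)"

definition adj :: "'e set \<Rightarrow> ('e \<Rightarrow> 'v) \<Rightarrow> ('e \<Rightarrow> 'v) \<Rightarrow> 'v \<Rightarrow> 'v \<Rightarrow> bool" where
  "adj E s t u v \<longleftrightarrow> (\<exists>e\<in>E. (s e = u \<and> t e = v) \<or> (s e = v \<and> t e = u))"

definition connected_graph :: "'v set \<Rightarrow> 'e set \<Rightarrow> ('e \<Rightarrow> 'v) \<Rightarrow> ('e \<Rightarrow> 'v) \<Rightarrow> bool" where
  "connected_graph V E s t \<longleftrightarrow> (\<forall>u\<in>V. \<forall>v\<in>V. (adj E s t)\<^sup>*\<^sup>* u v)"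

definition k_edge_connected :: "nat \<Rightarrow> 'v set \<Rightarrow> 'e set \<Rightarrow> ('e \<Rightarrow> 'v) \<Rightarrow> ('e \<Rightarrow> 'v) \<Rightarrow> bool" where
  "k_edge_connected k V E s t \<longleftrightarrow>
     (\<forall>F. F \<subseteq> E \<and> card F < k \<longrightarrow> connected_graph V (E - F) s t)"

definition arc :: "'e set \<Rightarrow> ('e \<Rightarrow> 'v) \<Rightarrow> ('e \<Rightarrow> 'v) \<Rightarrow> ('e \<Rightarrow> bool) \<Rightarrow> 'v \<Rightarrow> 'v \<Rightarrow> bool" where
  "arc E s t ori u v \<longleftrightarrow> (\<exists>e\<in>E. otail s t ori e = u \<and> ohead s t ori e = v)"

definition strong_orientation ::
  "'v set \<Rightarrow> 'e set \<Rightarrow> ('e \<Rightarrow> 'v) \<Rightarrow> ('e \<Rightarrow> 'v) \<Rightarrow> ('e \<Rightarrow> bool) \<Rightarrow> bool" where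
  "strong_orientation V E s t ori \<longleftrightarrow>
     (\<forall>u\<in>V. \<forall>v\<in>V. u \<noteq> v \<longrightarrow> (arc E s t ori)\<^sup>+\<^sup>+ u v)"

definition deletable ::
  "'v set \<Rightarrow> 'e set \<Rightarrow> ('e \<Rightarrow> 'v) \<Rightarrow> ('e \<Rightarrow> 'v) \<Rightarrow> ('e \<Rightarrow> bool) \<Rightarrow> 'e \<Rightarrow> bool" where
  "deletable V E s t ori e \<longleftrightarrow> strong_orientation V (E - {e}) s t ori"

definition all_positive_nz_flow ::
  "nat \<Rightarrow> 'v set \<Rightarrow> 'e set \<Rightarrow> ('e \<Rightarrow> 'v) \<Rightarrow> ('e \<Rightarrow> 'v) \<Rightarrow> ('e \<Rightarrow> bool) \<Rightarrow> ('e \<Rightarrow> nat) \<Rightarrow> bool" where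
  "all_positive_nz_flow k V E s t ori f \<longleftrightarrow>
     (\<forall>e\<in>E. 1 \<le> f e \<and> f e \<le> k - 1) \<and>
     (\<forall>v\<in>V. (\<Sum>e\<in>{e\<in>E. ohead s t ori e = v}. f e) = (\<Sum>e\<in>{e\<in>E. otail s t ori e = v}. f e))"

definition edge_cut :: "'e set \<Rightarrow> ('e \<Rightarrow> 'v) \<Rightarrow> ('e \<Rightarrow> 'v) \<Rightarrow> 'v set \<Rightarrow> 'e set" where
  "edge_cut E s t X = {e\<in>E. (s e \<in> X) \<noteq> (t e \<in> X)}"

definition three_edge_cut :: "'v set \<Rightarrow> 'e set \<Rightarrow> ('e \<Rightarrow> 'v) \<Rightarrow> ('e \<Rightarrow> 'v) \<Rightarrow> 'e set \<Rightarrow> bool" where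
  "three_edge_cut V E s t C \<longleftrightarrow>
     (\<exists>X. X \<subseteq> V \<and> X \<noteq> {} \<and> X \<noteq> V \<and> C = edge_cut E s t X) \<and> card C = 3"

definition strong_2_edge ::
  "'v set \<Rightarrow> 'e set \<Rightarrow> ('e \<Rightarrow> 'v) \<Rightarrow> ('e \<Rightarrow> 'v) \<Rightarrow> ('e \<Rightarrow> nat) \<Rightarrow> 'e \<Rightarrow> bool" where
  "strong_2_edge V E s t f e \<longleftrightarrow> e \<in> E \<and> f e = 2 \<and>
     \<not> (\<exists>C. three_edge_cut V E s t C \<and> e \<in> C \<and> (\<forall>e'\<in>C - {e}. f e' = 1))"

end

theory Submission
  imports Defs
begin

text \<open>If e cannot be deleted, the vertices reachable from some u in the orientation of G - e
  form a nonempty proper set X that only e can leave. By 3-edge-connectivity the cut of X has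
  at least three edges, hence at least two entering arcs, each carrying flow at least 1; flow
  conservation across the cut forces e to leave X with f e \<ge> 2. If f e = 2, the cut consists
  of e and exactly two entering edges of value 1, so e is not a strong 2-edge.\<close>

definition in_arcs :: "'e set \<Rightarrow> ('e \<Rightarrow> 'v) \<Rightarrow> ('e \<Rightarrow> 'v) \<Rightarrow> ('e \<Rightarrow> bool) \<Rightarrow> 'v set \<Rightarrow> 'e set" where
  "in_arcs E s t ori X = {e\<in>E. ohead s t ori e \<in> X \<and> otail s t ori e \<notin> X}"

definition out_arcs :: "'e set \<Rightarrow> ('e \<Rightarrow> 'v) \<Rightarrow> ('e \<Rightarrow> 'v) \<Rightarrow> ('e \<Rightarrow> bool) \<Rightarrow> 'v set \<Rightarrow> 'e set" where
  "out_arcs E s t ori X = {e\<in>E. otail s t ori e \<in> X \<and> ohead s t ori e \<notin> X}"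

lemma edge_cut_eq_in_arcs_Un_out_arcs:
  "edge_cut E s t X = in_arcs E s t ori X \<union> out_arcs E s t ori X"
  unfolding edge_cut_def in_arcs_def out_arcs_def ohead_def otail_def by auto

lemma in_arcs_Int_out_arcs: "in_arcs E s t ori X \<inter> out_arcs E s t ori X = {}"
  unfolding in_arcs_def out_arcs_def by auto

lemma out_arcs_Diff: "out_arcs (E - F) s t ori X = out_arcs E s t ori X - F"
  unfolding out_arcs_def by auto

lemma sum_edges_by_end:
  fixes f :: "'e \<Rightarrow> 'a::comm_monoid_add"
  assumes "finite E" "finite X"
  shows "(\<Sum>v\<in>X. \<Sum>e\<in>{e\<in>E. g e = v}. f e) = (\<Sum>e\<in>{e\<in>E. g e \<in> X}. f e)"
proof -
  have "(\<Sum>e\<in>{e\<in>E. g e \<in> X}. f e) = (\<Sum>v\<in>X. \<Sum>e\<in>{x\<in>{e\<in>E. g e \<in> X}. g x = v}. f e)"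
    by (rule sum.group[symmetric]) (use assms in auto)
  also have "\<dots> = (\<Sum>v\<in>X. \<Sum>e\<in>{e\<in>E. g e = v}. f e)"
    by (rule sum.cong) (auto intro: sum.cong)
  finally show ?thesis by simp
qed

lemma flow_in_arcs_eq_out_arcs:
  fixes f :: "'e \<Rightarrow> 'a::cancel_comm_monoid_add"
  assumes "finite E" "finite X" "X \<subseteq> V"
    and conservation: "\<forall>v\<in>V. (\<Sum>e\<in>{e\<in>E. ohead s t ori e = v}. f e)
                              = (\<Sum>e\<in>{e\<in>E. otail s t ori e = v}. f e)"
  shows "sum f (in_arcs E s t ori X) = sum f (out_arcs E s t ori X)"
proof -
  let ?h = "ohead s t ori" and ?tl = "otail s t ori"
  let ?inside = "{e\<in>E. ?h e \<in> X \<and> ?tl e \<in> X}"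
  have "(\<Sum>e\<in>{e\<in>E. ?h e \<in> X}. f e) = (\<Sum>v\<in>X. \<Sum>e\<in>{e\<in>E. ?h e = v}. f e)"
    by (simp add: sum_edges_by_end[OF assms(1,2)])
  also have "\<dots> = (\<Sum>v\<in>X. \<Sum>e\<in>{e\<in>E. ?tl e = v}. f e)"
    using conservation \<open>X \<subseteq> V\<close> by (intro sum.cong[OF refl]) blast
  also have "\<dots> = (\<Sum>e\<in>{e\<in>E. ?tl e \<in> X}. f e)"
    by (simp add: sum_edges_by_end[OF assms(1,2)])
  finally have heads_tails: "(\<Sum>e\<in>{e\<in>E. ?h e \<in> X}. f e) = (\<Sum>e\<in>{e\<in>E. ?tl e \<in> X}. f e)" .
  have "{e\<in>E. ?h e \<in> X} = ?inside \<union> in_arcs E s t ori X"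
    and "{e\<in>E. ?tl e \<in> X} = ?inside \<union> out_arcs E s t ori X"
    unfolding in_arcs_def out_arcs_def by auto
  moreover have "?inside \<inter> in_arcs E s t ori X = {}" "?inside \<inter> out_arcs E s t ori X = {}"
    unfolding in_arcs_def out_arcs_def by auto
  moreover have "finite ?inside" "finite (in_arcs E s t ori X)" "finite (out_arcs E s t ori X)"
    using \<open>finite E\<close> unfolding in_arcs_def out_arcs_def by auto
  ultimately show ?thesis
    using heads_tails by (simp add: sum.union_disjoint)
qed

lemma not_strong_orientation_imp_closed_set:
  assumes "\<not> strong_orientation V F s t ori" and ends: "\<forall>e\<in>F. s e \<in> V \<and> t e \<in> V"
  obtains X where "X \<subseteq> V" "X \<noteq> {}" "X \<noteq> V" "out_arcs F s t ori X = {}"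
proof -
  from assms obtain u v where "u \<in> V" "v \<in> V" "u \<noteq> v" and unreachable: "\<not> (arc F s t ori)\<^sup>+\<^sup>+ u v"
    unfolding strong_orientation_def by blast
  define X where "X = {w\<in>V. (arc F s t ori)\<^sup>*\<^sup>* u w}"
  have "v \<notin> X"
    using unreachable \<open>u \<noteq> v\<close> by (auto simp: X_def dest: rtranclpD)
  moreover have "out_arcs F s t ori X = {}"
  proof -
    have "otail s t ori x \<notin> X" if "x \<in> F" "ohead s t ori x \<notin> X" for x
    proof
      assume "otail s t ori x \<in> X"
      moreover have "arc F s t ori (otail s t ori x) (ohead s t ori x)"
        unfolding arc_def using \<open>x \<in> F\<close> by auto
      moreover have "ohead s t ori x \<in> V"
        using ends \<open>x \<in> F\<close> by (simp add: ohead_def)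
      ultimately have "ohead s t ori x \<in> X"
        by (auto simp: X_def)
      with \<open>ohead s t ori x \<notin> X\<close> show False ..
    qed
    then show ?thesis unfolding out_arcs_def by auto
  qed
  ultimately show ?thesis
    using that[of X] \<open>u \<in> V\<close> \<open>v \<in> V\<close> by (auto simp: X_def)
qed

lemma k_edge_connected_card_edge_cut:
  assumes "k_edge_connected k V E s t" "X \<subseteq> V" "X \<noteq> {}" "X \<noteq> V"
  shows "k \<le> card (edge_cut E s t X)"
proof (rule ccontr)
  assume "\<not> k \<le> card (edge_cut E s t X)"
  moreover have "edge_cut E s t X \<subseteq> E"
    unfolding edge_cut_def by auto
  ultimately have connected: "connected_graph V (E - edge_cut E s t X) s t"
    using assms(1) unfolding k_edge_connected_def by simp
  obtain u v where "u \<in> X" "v \<in> V" "v \<notin> X"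
    using assms(2-4) by blast
  have "(adj (E - edge_cut E s t X) s t)\<^sup>*\<^sup>* u v"
    using connected \<open>u \<in> X\<close> \<open>v \<in> V\<close> assms(2) unfolding connected_graph_def by blast
  then have "v \<in> X"
    using \<open>u \<in> X\<close> by induction (auto simp: adj_def edge_cut_def)
  with \<open>v \<notin> X\<close> show False ..
qed

text \<open>A and B play the roles of the entering and leaving edges of a cut that only e may leave.\<close>

lemma flow_through_single_out_arc:
  fixes f :: "'e \<Rightarrow> nat"
  assumes "finite A" and pos: "\<forall>x\<in>A. 1 \<le> f x" and "A \<inter> B = {}" "B \<subseteq> {e}"
    and "3 \<le> card (A \<union> B)" and balance: "sum f A = sum f B"
  shows "e \<in> B" "2 \<le> f e" "f e = 2 \<Longrightarrow> card (A \<union> B) = 3 \<and> (\<forall>x\<in>A \<union> B - {e}. f x = 1)"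
proof -
  have "finite B" "card B \<le> 1"
    using \<open>B \<subseteq> {e}\<close> by (auto intro: finite_subset dest: card_mono[rotated])
  then have card_A: "2 \<le> card A"
    using \<open>3 \<le> card (A \<union> B)\<close> card_Un_le[of A B] by linarith
  have card_le_sum: "card A' \<le> sum f A'" if "A' \<subseteq> A" for A'
    using sum_bounded_below[of A' 1 f] pos that by auto
  have "2 \<le> sum f B"
    using card_A card_le_sum[of A] balance by simp
  then show "e \<in> B"
    using \<open>B \<subseteq> {e}\<close> by (cases "e \<in> B") (auto simp: subset_singleton_iff)
  then have B: "B = {e}"
    using \<open>B \<subseteq> {e}\<close> by auto
  with \<open>2 \<le> sum f B\<close> show "2 \<le> f e" by simp
  assume "f e = 2"
  then have "sum f A = 2"
    using balance B by simp
  then have "card A = 2"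
    using card_A card_le_sum[of A] by simp
  moreover have "f x = 1" if "x \<in> A" for x
  proof -
    have "sum f A = f x + sum f (A - {x})"
      using \<open>finite A\<close> \<open>x \<in> A\<close> by (simp add: sum.remove)
    moreover have "card (A - {x}) = 1"
      using \<open>card A = 2\<close> \<open>x \<in> A\<close> by simp
    ultimately show ?thesis
      using \<open>sum f A = 2\<close> card_le_sum[of "A - {x}"] pos \<open>x \<in> A\<close> by force
  qed
  ultimately show "card (A \<union> B) = 3 \<and> (\<forall>x\<in>A \<union> B - {e}. f x = 1)"
    using B \<open>A \<inter> B = {}\<close> \<open>finite A\<close> by (auto simp: card_Un_disjoint)
qed

theorem lemma1:
  fixes V :: "'v set" and E :: "'e set" and s t :: "'e \<Rightarrow> 'v"
    and ori :: "'e \<Rightarrow> bool" and f :: "'e \<Rightarrow> nat" and k :: nat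
  assumes "graph V E s t"
    and "k_edge_connected 3 V E s t"
    and "all_positive_nz_flow k V E s t ori f"
    and "e \<in> E"
    and "f e = 1 \<or> strong_2_edge V E s t f e"
  shows "deletable V E s t ori e"
proof (rule ccontr)
  assume "\<not> deletable V E s t ori e"
  moreover have "\<forall>x\<in>E - {e}. s x \<in> V \<and> t x \<in> V"
    using assms(1) unfolding graph_def by blast
  ultimately obtain X where X: "X \<subseteq> V" "X \<noteq> {}" "X \<noteq> V" and "out_arcs (E - {e}) s t ori X = {}"
    unfolding deletable_def by (rule not_strong_orientation_imp_closed_set)
  let ?In = "in_arcs E s t ori X" and ?Out = "out_arcs E s t ori X"
  have "?Out \<subseteq> {e}"
    using \<open>out_arcs (E - {e}) s t ori X = {}\<close> by (simp add: out_arcs_Diff)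
  have "finite E" "finite X"
    using assms(1) X(1) unfolding graph_def by (auto intro: finite_subset)
  have pos: "\<forall>x\<in>?In. 1 \<le> f x" and balance: "sum f ?In = sum f ?Out"
    using assms(3) flow_in_arcs_eq_out_arcs[OF \<open>finite E\<close> \<open>finite X\<close> X(1)]
    unfolding all_positive_nz_flow_def in_arcs_def by auto
  have "finite ?In"
    using \<open>finite E\<close> unfolding in_arcs_def by simp
  have card_cut: "3 \<le> card (?In \<union> ?Out)"
    using k_edge_connected_card_edge_cut[OF assms(2) X]
    unfolding edge_cut_eq_in_arcs_Un_out_arcs[where ori = ori] .
  note cut = flow_through_single_out_arc[OF \<open>finite ?In\<close> pos in_arcs_Int_out_arcs
      \<open>?Out \<subseteq> {e}\<close> card_cut balance]
  from cut(2) assms(5) have "strong_2_edge V E s t f e" "f e = 2"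
    unfolding strong_2_edge_def by auto
  moreover have "three_edge_cut V E s t (?In \<union> ?Out)"
    using cut(3)[OF \<open>f e = 2\<close>] X
    unfolding three_edge_cut_def by (metis edge_cut_eq_in_arcs_Un_out_arcs[where ori = ori])
  ultimately show False
    using cut(1,3) unfolding strong_2_edge_def by blast
qed

end
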